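(* Let $L$ be a C-lattice domain in which every element is a join of principal elements. If $L$ is sharp, then $L$ is pseudo-Dedekind, i.e. $(x:a)$ is a principal element whenever $x,a\in L$ and $x$ is principal.
   Context: A multiplicative lattice is a complete lattice $(L,\le)$ with bottom $0$ and top $1$ which is also a commutative monoid with identity $1$ such that $a(\bigvee_\alpha b_\alpha)=\bigvee_\alpha(ab_\alpha)$ for all $a,b_\alpha\in L$. For $x,y\in L$, $(y:x)=\bigvee\{a\in L: ax\le y\}$. An element $c$ is compact if $c\le\bigvee S$ implies $c\le\bigvee T$ for some finite $T\subseteq S$. A C-lattice is a multiplicative lattice in which $1$ is compact, the product of two compact elements is compact, and every element is a join of compact elements. A proper element $p\ne1$ is prime if $xy\le p$ implies $x\le p$ or $y\le p$; $L$ is a domain if $0$ is prime. An element $x$ is principal if $y\wedge zx=((y:x)\wedge z)x$ and $y\vee(z:x)=((yx\vee z):x)$ for all $y,z\in L$. $L$ is sharp if whenever $a_1a_2\le b$ with $a_1,a_2,b\in L$, there exist $b_1,b_2\in L$ with $a_i\le b_i$ ($i=1,2$) and $b=b_1b_2$. *)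

theory Defs
  imports Main
begin

text \<open>Bottom is \<open>bot\<close> (written 0 in the paper), top is \<open>top = 1\<close>.\<close>

definition mult_lattice :: "'a::{complete_lattice,comm_monoid_mult} itself \<Rightarrow> bool" where
  "mult_lattice _ \<longleftrightarrow> (top::'a) = 1 \<and> (\<forall>(a::'a) S. a * Sup S = (SUP b\<in>S. a * b))"

definition res :: "'a::{complete_lattice,comm_monoid_mult} \<Rightarrow> 'a \<Rightarrow> 'a" where
  "res y x = Sup {a. a * x \<le> y}"

definition compact_el :: "'a::complete_lattice \<Rightarrow> bool" where
  "compact_el c \<longleftrightarrow> (\<forall>S. c \<le> Sup S \<longrightarrow> (\<exists>T\<subseteq>S. finite T \<and> c \<le> Sup T))"

definition C_lattice :: "'a::{complete_lattice,comm_monoid_mult} itself \<Rightarrow> bool" where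
  "C_lattice t \<longleftrightarrow> mult_lattice t \<and> compact_el (1::'a)
     \<and> (\<forall>a b::'a. compact_el a \<longrightarrow> compact_el b \<longrightarrow> compact_el (a * b))
     \<and> (\<forall>x::'a. \<exists>S. (\<forall>s\<in>S. compact_el s) \<and> x = Sup S)"

definition prime_el :: "'a::{complete_lattice,comm_monoid_mult} \<Rightarrow> bool" where
  "prime_el p \<longleftrightarrow> p \<noteq> 1 \<and> (\<forall>x y. x * y \<le> p \<longrightarrow> x \<le> p \<or> y \<le> p)"

definition lattice_domain :: "'a::{complete_lattice,comm_monoid_mult} itself \<Rightarrow> bool" where
  "lattice_domain _ \<longleftrightarrow> prime_el (bot::'a)"

definition principal_el :: "'a::{complete_lattice,comm_monoid_mult} \<Rightarrow> bool" where
  "principal_el x \<longleftrightarrow> (\<forall>y z. inf y (z * x) = (inf (res y x) z) * x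
                             \<and> sup y (res z x) = res (sup (y * x) z) x)"

definition sharp :: "'a::{complete_lattice,comm_monoid_mult} itself \<Rightarrow> bool" where
  "sharp _ \<longleftrightarrow> (\<forall>a1 a2 b::'a. a1 * a2 \<le> b \<longrightarrow>
       (\<exists>b1 b2. a1 \<le> b1 \<and> a2 \<le> b2 \<and> b = b1 * b2))"

definition pseudo_Dedekind :: "'a::{complete_lattice,comm_monoid_mult} itself \<Rightarrow> bool" where
  "pseudo_Dedekind _ \<longleftrightarrow> (\<forall>x a::'a. principal_el x \<longrightarrow> principal_el (res x a))"

end

theory Submission
  imports Defs
begin

text \<open>Since \<open>a (x:a) \<le> x\<close>, sharpness gives \<open>x = b\<^sub>1 b\<^sub>2\<close> with \<open>a \<le> b\<^sub>1\<close> and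
  \<open>(x:a) \<le> b\<^sub>2\<close>; then \<open>b\<^sub>2 a \<le> b\<^sub>2 b\<^sub>1 = x\<close> forces \<open>b\<^sub>2 = (x:a)\<close>, so \<open>(x:a)\<close> is a
  factor of \<open>x\<close>. In a domain a nonzero principal element is cancellable, and every factor
  of it inherits both defining identities of principality.\<close>

context
  assumes mult_lattice: "mult_lattice TYPE('a::{complete_lattice,comm_monoid_mult})"
begin

lemma top_eq_one: "(top::'a) = 1"
  using mult_lattice by (simp add: mult_lattice_def)

lemma mult_Sup_distrib: "(c::'a) * Sup S = (SUP b\<in>S. c * b)"
  using mult_lattice by (simp add: mult_lattice_def)

lemma mult_sup_distrib: "(c::'a) * sup a b = sup (c * a) (c * b)"
  using mult_Sup_distrib[of c "{a, b}"] by simp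

lemma mult_bot_right: "(c::'a) * bot = bot"
  using mult_Sup_distrib[of c "{}"] by simp

lemma mult_left_isotone: "(a::'a) \<le> b \<Longrightarrow> c * a \<le> c * b"
  by (metis mult_sup_distrib sup.absorb_iff2 sup.cobounded1)

lemma mult_right_isotone: "(a::'a) \<le> b \<Longrightarrow> a * c \<le> b * c"
  using mult_left_isotone by (simp add: mult.commute)

lemma mult_le_right: "(a::'a) * b \<le> b"
  using mult_right_isotone[OF top_greatest, of a b] by (simp add: top_eq_one)

lemma res_mult_le: "res (y::'a) x * x \<le> y"
proof -
  have "res y x * x = (SUP a\<in>{a. a * x \<le> y}. x * a)"
    by (simp add: res_def mult.commute mult_Sup_distrib)
  also have "\<dots> \<le> y"
    by (rule SUP_least) (simp add: mult.commute)
  finally show ?thesis .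
qed

lemma res_le_iff: "(a::'a) \<le> res y x \<longleftrightarrow> a * x \<le> y"
proof
  assume "a \<le> res y x"
  then show "a * x \<le> y"
    using mult_right_isotone res_mult_le order_trans by blast
qed (simp add: res_def Sup_upper)

lemma res_bot: "res (y::'a) bot = top"
  by (simp add: res_le_iff mult_bot_right flip: top.extremum_unique)

lemma res_top: "res (y::'a) top = y"
  by (metis res_le_iff top_eq_one mult_1_right order_antisym order_refl)

lemma principal_top: "principal_el (top::'a)"
  using res_top by (simp add: principal_el_def top_eq_one)

lemma principal_bot: "principal_el (bot::'a)"
  by (simp add: principal_el_def res_bot mult_bot_right)

lemma principal_inf_eq: "principal_el (x::'a) \<Longrightarrow> inf y x = res y x * x"
  unfolding principal_el_def by (metis inf_top_right mult_1_left top_eq_one)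

lemma sharp_res_factor:
  assumes "sharp TYPE('a)"
  shows "\<exists>b. (x::'a) = b * res x a"
proof -
  have "a * res x a \<le> x"
    using res_mult_le by (simp add: mult.commute)
  then obtain b\<^sub>1 b\<^sub>2 where "a \<le> b\<^sub>1" "res x a \<le> b\<^sub>2" and x: "x = b\<^sub>1 * b\<^sub>2"
    using assms unfolding sharp_def by blast
  have "b\<^sub>2 * a \<le> x"
    using mult_left_isotone[OF \<open>a \<le> b\<^sub>1\<close>, of b\<^sub>2] x by (metis mult.commute)
  then have b\<^sub>2: "b\<^sub>2 = res x a"
    using \<open>res x a \<le> b\<^sub>2\<close> by (simp add: res_le_iff order_antisym mult.commute)
  from x show ?thesis
    unfolding b\<^sub>2 by blast
qed

context
  assumes domain: "lattice_domain TYPE('a)"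
begin

lemma res_bot_nonbot: "(x::'a) \<noteq> bot \<Longrightarrow> res bot x = bot"
  using res_mult_le[of bot x] domain
  unfolding lattice_domain_def prime_el_def by (metis bot.extremum_uniqueI)

lemma principal_res_bot: "principal_el (res bot (a::'a))"
  by (cases "a = bot") (simp_all add: res_bot principal_top res_bot_nonbot principal_bot)

lemma principal_mult_cancel:
  assumes "(x::'a) \<noteq> bot" "principal_el x" "y * x \<le> z * x"
  shows "y \<le> z"
proof -
  have "sup z (res bot x) = res (sup (z * x) bot) x"
    using \<open>principal_el x\<close> unfolding principal_el_def by blast
  then have "res (z * x) x = z"
    using res_bot_nonbot[OF \<open>x \<noteq> bot\<close>] by simp
  with \<open>y * x \<le> z * x\<close> show ?thesis
    by (metis res_le_iff)
qed

context
  fixes x b c :: 'a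
  assumes nonbot: "x \<noteq> bot" and principal: "principal_el x" and factor: "x = b * c"
begin

lemma factor_mult_cancel_right: "t * c \<le> s * c \<Longrightarrow> t \<le> s"
  using mult_right_isotone[of "t * c" "s * c" b] principal_mult_cancel[OF nonbot principal]
  by (simp add: factor ac_simps)

lemma factor_mult_cancel_left: "b * t \<le> b * s \<Longrightarrow> t \<le> s"
  using mult_right_isotone[of "b * t" "b * s" c] principal_mult_cancel[OF nonbot principal]
  by (simp add: factor ac_simps)

lemma res_factor_eq: "res y c = res (y * b) x"
proof (rule order_antisym)
  have "res y c * x = (res y c * c) * b"
    by (simp add: factor ac_simps)
  also have "\<dots> \<le> y * b"
    by (rule mult_right_isotone[OF res_mult_le])
  finally show "res y c \<le> res (y * b) x"
    by (simp add: res_le_iff)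
next
  have "b * (res (y * b) x * c) = res (y * b) x * x"
    by (simp add: factor ac_simps)
  also have "\<dots> \<le> b * y"
    using res_mult_le by (simp add: mult.commute)
  finally show "res (y * b) x \<le> res y c"
    by (simp add: res_le_iff factor_mult_cancel_left)
qed

lemma below_factor_eq: "w \<le> c \<Longrightarrow> w = res (w * b) x * c"
proof -
  assume "w \<le> c"
  then have "w * b \<le> x"
    using mult_left_isotone[of w c b] by (simp add: factor mult.commute)
  then have "w * b = res (w * b) x * x"
    using principal_inf_eq[OF principal] by (metis inf.absorb1)
  then have "b * w = b * (res (w * b) x * c)"
    by (simp add: factor ac_simps)
  then show ?thesis
    by (metis factor_mult_cancel_left order_antisym order_refl)
qed

lemma principal_factor: "principal_el c"
  unfolding principal_el_def
proof (intro allI conjI)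
  fix y z :: 'a
  show "inf y (z * c) = inf (res y c) z * c"
  proof (rule order_antisym)
    define d where "d = res (inf y (z * c) * b) x"
    have d: "inf y (z * c) = d * c"
      unfolding d_def by (rule below_factor_eq) (simp add: le_infI2 mult_le_right)
    then have "d * c \<le> y" "d * c \<le> z * c"
      by (metis inf_le1, metis inf_le2)
    then have "d \<le> res y c" "d \<le> z"
      by (simp_all add: res_le_iff factor_mult_cancel_right)
    then show "inf y (z * c) \<le> inf (res y c) z * c"
      by (simp add: d mult_right_isotone)
  next
    show "inf (res y c) z * c \<le> inf y (z * c)"
      by (meson inf_le1 inf_le2 le_inf_iff mult_right_isotone res_le_iff)
  qed
next
  fix y z :: 'a
  have "res (sup (y * c) z) c = res (sup (y * x) (z * b)) x"
    by (simp add: res_factor_eq mult_sup_distrib factor ac_simps)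
  also have "\<dots> = sup y (res (z * b) x)"
    using principal unfolding principal_el_def by metis
  finally show "sup y (res z c) = res (sup (y * c) z) c"
    by (simp add: res_factor_eq)
qed

end

end

end

theorem proposition3p2:
  assumes "C_lattice TYPE('a::{complete_lattice,comm_monoid_mult})"
    and "lattice_domain TYPE('a)"
    and "\<forall>x::'a. \<exists>S. (\<forall>s\<in>S. principal_el s) \<and> x = Sup S"
    and "sharp TYPE('a)"
  shows "pseudo_Dedekind TYPE('a)"
  unfolding pseudo_Dedekind_def
proof (intro allI impI)
  fix x a :: 'a
  assume "principal_el x"
  have ml: "mult_lattice TYPE('a)"
    using assms(1) by (simp add: C_lattice_def)
  show "principal_el (res x a)"
  proof (cases "x = bot")
    case True
    then show ?thesis
      using principal_res_bot[OF ml assms(2)] by simp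
  next
    case False
    obtain b where "x = b * res x a"
      using sharp_res_factor[OF ml assms(4)] by blast
    then show ?thesis
      using principal_factor[OF ml assms(2) False \<open>principal_el x\<close>] by blast
  qed
qed

end
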